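(* Let $Q\in\mathcal{Q}(n,d,m)$ and $\underline{\delta}\in\Omega_2(Q)$. Then $|\underline{\delta}|\leq m(d-n-1)+2n$.
   Context: A quiver $Q$ is a finite oriented graph; for an arrow $a$, $a''$ is its tail and $a'$ its head. A path $a=a_1\cdots a_s$ ($a_i$ arrows) satisfies $a_i'=a_{i+1}''$; it is closed if $a_1''=a_s'$; $V(a)=\{a_1'',a_1',\dots,a_s'\}$, $A(a)=\{a_1,\dots,a_s\}$. A closed path is primitive if each vertex of $V(a)$ is the head of exactly one $a_i$. $m(Q)$ is the maximal degree of a primitive closed path; $Q$ is strongly connected if some closed path contains all vertices; $\mathcal{Q}(n,d,m)$ is the set of strongly connected quivers with $n$ vertices, $d$ arrows and $m(Q)=m$. The multidegree $\mathrm{mdeg}(a)\in\mathbb{N}^{\#A(Q)}$ has $b$-component equal to the number of $i$ with $a_i=b$; $|\underline{\delta}|=\sum_b\delta_b$. For a nonzero $\underline{\delta}\in\mathbb{N}^{\#A(Q)}$, its support $Q_{\underline{\delta}}$ is the subquiver with arrows $\{a:\delta_a\geq1\}$ and vertices the heads and tails of these arrows; $\underline{\delta}$ is decomposable (with respect to $Q$) if $Q_{\underline{\delta}}$ is not strongly connected but is a disjoint union of strongly connected quivers. $\Omega_0(Q)$ is the set of $\mathrm{mdeg}(h)$ for closed paths $h$ in $Q$ with $A(h)=A(Q)$. A path $a$ is $\underline{\delta}$-double if it is a primitive closed path and $\delta_{a_i}\geq2$ for all $i$. $\Omega_2(Q)$ is the set of $\underline{\delta}\in\Omega_0(Q)$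 such that for every $\underline{\delta}$-double path $a$ in $Q$ the vector $\underline{\delta}-2\,\mathrm{mdeg}(a)$ is decomposable with respect to $Q$. *)

theory Defs
  imports Main
begin

(* A quiver is given by a vertex set V, an arrow set Ar, and tail/head maps tail, head
   (a'' = tail a, a' = head a). Multiple arrows and loops are allowed. *)

definition quiver :: "'v set \<Rightarrow> 'a set \<Rightarrow> ('a \<Rightarrow> 'v) \<Rightarrow> ('a \<Rightarrow> 'v) \<Rightarrow> bool" where
  "quiver V Ar tail head \<longleftrightarrow> finite V \<and> finite Ar \<and> tail ` Ar \<subseteq> V \<and> head ` Ar \<subseteq> V"

definition is_path :: "'a set \<Rightarrow> ('a \<Rightarrow> 'v) \<Rightarrow> ('a \<Rightarrow> 'v) \<Rightarrow> 'a list \<Rightarrow> bool" where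
  "is_path Ar tail head p \<longleftrightarrow> p \<noteq> [] \<and> set p \<subseteq> Ar \<and>
     (\<forall>i. Suc i < length p \<longrightarrow> head (p ! i) = tail (p ! Suc i))"

definition closed_path :: "'a set \<Rightarrow> ('a \<Rightarrow> 'v) \<Rightarrow> ('a \<Rightarrow> 'v) \<Rightarrow> 'a list \<Rightarrow> bool" where
  "closed_path Ar tail head p \<longleftrightarrow> is_path Ar tail head p \<and> tail (p ! 0) = head (last p)"

definition path_verts :: "('a \<Rightarrow> 'v) \<Rightarrow> ('a \<Rightarrow> 'v) \<Rightarrow> 'a list \<Rightarrow> 'v set" where
  "path_verts tail head p = insert (tail (p ! 0)) (head ` set p)"

definition primitive_closed :: "'a set \<Rightarrow> ('a \<Rightarrow> 'v) \<Rightarrow> ('a \<Rightarrow> 'v) \<Rightarrow> 'a list \<Rightarrow> bool" where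
  "primitive_closed Ar tail head p \<longleftrightarrow> closed_path Ar tail head p \<and>
     (\<forall>v \<in> path_verts tail head p. card {i. i < length p \<and> head (p ! i) = v} = 1)"

definition mQ :: "'a set \<Rightarrow> ('a \<Rightarrow> 'v) \<Rightarrow> ('a \<Rightarrow> 'v) \<Rightarrow> nat" where
  "mQ Ar tail head = Max {length p | p. primitive_closed Ar tail head p}"

definition strongly_connected :: "'v set \<Rightarrow> 'a set \<Rightarrow> ('a \<Rightarrow> 'v) \<Rightarrow> ('a \<Rightarrow> 'v) \<Rightarrow> bool" where
  "strongly_connected V Ar tail head \<longleftrightarrow> (\<exists>p. closed_path Ar tail head p \<and> V \<subseteq> path_verts tail head p)"

definition QClass :: "nat \<Rightarrow> nat \<Rightarrow> nat \<Rightarrow> 'v set \<Rightarrow> 'a set \<Rightarrow> ('a \<Rightarrow> 'v) \<Rightarrow> ('a \<Rightarrow> 'v) \<Rightarrow> bool" where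
  "QClass n d m V Ar tail head \<longleftrightarrow> quiver V Ar tail head \<and> strongly_connected V Ar tail head \<and>
     card V = n \<and> card Ar = d \<and> mQ Ar tail head = m"

definition mdeg :: "'a list \<Rightarrow> 'a \<Rightarrow> nat" where
  "mdeg p = (\<lambda>b. count_list p b)"

definition arrow_verts :: "('a \<Rightarrow> 'v) \<Rightarrow> ('a \<Rightarrow> 'v) \<Rightarrow> 'a set \<Rightarrow> 'v set" where
  "arrow_verts tail head S = tail ` S \<union> head ` S"

definition supp_arrows :: "'a set \<Rightarrow> ('a \<Rightarrow> nat) \<Rightarrow> 'a set" where
  "supp_arrows Ar \<delta> = {a \<in> Ar. \<delta> a \<ge> 1}"

definition decomposable :: "'a set \<Rightarrow> ('a \<Rightarrow> 'v) \<Rightarrow> ('a \<Rightarrow> 'v) \<Rightarrow> ('a \<Rightarrow> nat) \<Rightarrow> bool" where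
  "decomposable Ar tail head \<delta> \<longleftrightarrow>
     (let S = supp_arrows Ar \<delta> in
      S \<noteq> {} \<and>
      \<not> strongly_connected (arrow_verts tail head S) S tail head \<and>
      (\<exists>P. \<Union>P = S \<and>
           (\<forall>X\<in>P. X \<noteq> {} \<and> strongly_connected (arrow_verts tail head X) X tail head) \<and>
           (\<forall>X\<in>P. \<forall>Y\<in>P. X \<noteq> Y \<longrightarrow> arrow_verts tail head X \<inter> arrow_verts tail head Y = {})))"

definition Omega0 :: "'a set \<Rightarrow> ('a \<Rightarrow> 'v) \<Rightarrow> ('a \<Rightarrow> 'v) \<Rightarrow> ('a \<Rightarrow> nat) set" where
  "Omega0 Ar tail head = {mdeg h | h. closed_path Ar tail head h \<and> set h = Ar}"

definition delta_double :: "'a set \<Rightarrow> ('a \<Rightarrow> 'v) \<Rightarrow> ('a \<Rightarrow> 'v) \<Rightarrow> ('a \<Rightarrow> nat) \<Rightarrow> 'a list \<Rightarrow> bool" where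
  "delta_double Ar tail head \<delta> p \<longleftrightarrow> primitive_closed Ar tail head p \<and> (\<forall>i < length p. \<delta> (p ! i) \<ge> 2)"

definition Omega2 :: "'a set \<Rightarrow> ('a \<Rightarrow> 'v) \<Rightarrow> ('a \<Rightarrow> 'v) \<Rightarrow> ('a \<Rightarrow> nat) set" where
  "Omega2 Ar tail head = {\<delta> \<in> Omega0 Ar tail head.
     \<forall>p. delta_double Ar tail head \<delta> p \<longrightarrow>
        decomposable Ar tail head (\<lambda>b. \<delta> b - 2 * mdeg p b)}"

end

theory Submission
  imports Defs
begin

text \<open>Measure arrow sets by weak connectivity and by the cycle rank
  \<open>|A| - |V(A)| + #components(A)\<close>. For a balanced \<open>\<rho> \<le> \<delta>\<close> with connected support \<open>K\<close>,
  \<open>|\<rho>|\<close> is bounded by induction on \<open>|\<rho>|\<close>: \<open>K\<close> contains a primitive cycle, of length at most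
  \<open>m\<close>; peeling it off \<open>\<rho>\<close>, twice if \<open>\<rho> \<ge> 2\<close> along it, lowers the cycle rank, and the
  induction hypothesis applies to each component of what remains. The second copy of the cycle
  is paid for by the \<open>\<Omega>\<^sub>2\<close> condition, which makes the remainder together with the support
  of \<open>\<delta> - \<rho>\<close> disconnected. For \<open>\<rho> = \<delta>\<close> the bound reads \<open>m (d - n - 1) + 2 n\<close>.\<close>

locale quiver_graph =
  fixes tail head :: "'a \<Rightarrow> 'v"
begin

definition ends :: "'a \<Rightarrow> 'v set" where
  "ends a = {tail a, head a}"

abbreviation verts :: "'a set \<Rightarrow> 'v set" where
  "verts A \<equiv> arrow_verts tail head A"

lemma verts_eq_UN: "verts A = (\<Union>a\<in>A. ends a)"
  unfolding arrow_verts_def ends_def by auto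

lemma ends_subset_verts: "a \<in> A \<Longrightarrow> ends a \<subseteq> verts A"
  unfolding verts_eq_UN by auto

lemma verts_mono: "A \<subseteq> B \<Longrightarrow> verts A \<subseteq> verts B"
  unfolding verts_eq_UN by auto

lemma verts_Un: "verts (A \<union> B) = verts A \<union> verts B"
  unfolding verts_eq_UN by auto

lemma verts_insert: "verts (insert a A) = ends a \<union> verts A"
  unfolding verts_eq_UN by auto

lemma verts_Union: "verts (\<Union>S) = (\<Union>Z\<in>S. verts Z)"
  unfolding verts_eq_UN by auto

lemma verts_empty [simp]: "verts {} = {}"
  unfolding verts_eq_UN by auto

lemma verts_nonempty: "A \<noteq> {} \<Longrightarrow> verts A \<noteq> {}"
  unfolding verts_eq_UN ends_def by auto

lemma finite_ends [simp]: "finite (ends a)"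
  unfolding ends_def by auto

lemma finite_verts: "finite A \<Longrightarrow> finite (verts A)"
  unfolding verts_eq_UN by auto

lemma card_ends_le: "card (ends a) \<le> 2"
  unfolding ends_def by (auto simp: card_insert_if)

lemma card_ends_loop: "tail a = head a \<Longrightarrow> card (ends a) = 1"
  unfolding ends_def by auto

definition adjacent :: "'a set \<Rightarrow> ('a \<times> 'a) set" where
  "adjacent A = {(a, b). a \<in> A \<and> b \<in> A \<and> ends a \<inter> ends b \<noteq> {}}"

definition weakly_connected :: "'a set \<Rightarrow> bool" where
  "weakly_connected A \<longleftrightarrow> A \<noteq> {} \<and> (\<forall>a\<in>A. \<forall>b\<in>A. (a, b) \<in> (adjacent A)\<^sup>*)"

definition separated :: "'a set \<Rightarrow> 'a set \<Rightarrow> bool" where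
  "separated A Z \<longleftrightarrow> (\<forall>b\<in>A - Z. ends b \<inter> verts Z = {})"

definition components :: "'a set \<Rightarrow> 'a set set" where
  "components A = {Z. Z \<subseteq> A \<and> weakly_connected Z \<and> separated A Z}"

lemma adjacentI: "a \<in> A \<Longrightarrow> b \<in> A \<Longrightarrow> v \<in> ends a \<Longrightarrow> v \<in> ends b \<Longrightarrow> (a, b) \<in> adjacent A"
  unfolding adjacent_def by auto

lemma adjacent_mono: "A \<subseteq> B \<Longrightarrow> adjacent A \<subseteq> adjacent B"
  unfolding adjacent_def by auto

lemma reachable_mono: "A \<subseteq> B \<Longrightarrow> (a, b) \<in> (adjacent A)\<^sup>* \<Longrightarrow> (a, b) \<in> (adjacent B)\<^sup>*"
  using rtrancl_mono[OF adjacent_mono] by blast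

lemma sym_adjacent: "sym (adjacent A)"
  unfolding adjacent_def sym_def by auto

lemma reachable_sym: "(a, b) \<in> (adjacent A)\<^sup>* \<Longrightarrow> (b, a) \<in> (adjacent A)\<^sup>*"
  using symD[OF sym_rtrancl[OF sym_adjacent]] .

lemma reachable_in: "(a, b) \<in> (adjacent A)\<^sup>* \<Longrightarrow> a \<in> A \<Longrightarrow> b \<in> A"
  by (induction rule: rtrancl_induct) (auto simp: adjacent_def)

lemma weakly_connectedI:
  assumes "a0 \<in> A" and "\<And>b. b \<in> A \<Longrightarrow> (a0, b) \<in> (adjacent A)\<^sup>*"
  shows "weakly_connected A"
  unfolding weakly_connected_def
proof (intro conjI ballI)
  fix a b assume "a \<in> A" "b \<in> A"
  then show "(a, b) \<in> (adjacent A)\<^sup>*"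
    using assms(2) reachable_sym by (meson rtrancl_trans)
qed (use assms(1) in auto)

lemma weakly_connected_singleton: "weakly_connected {a}"
  unfolding weakly_connected_def by auto

lemma weakly_connected_separated_subset:
  assumes "weakly_connected Z" "Z \<subseteq> A" "separated A Y" "Z \<inter> Y \<noteq> {}"
  shows "Z \<subseteq> Y"
proof
  fix b assume b: "b \<in> Z"
  obtain a where a: "a \<in> Z" "a \<in> Y" using assms(4) by auto
  have "(a, b) \<in> (adjacent Z)\<^sup>*"
    using assms(1) a b unfolding weakly_connected_def by auto
  then show "b \<in> Y"
  proof (induction rule: rtrancl_induct)
    case base then show ?case using a by simp
  next
    case (step y z)
    then have "z \<in> Z" "ends y \<inter> ends z \<noteq> {}" unfolding adjacent_def by auto
    moreover have "ends y \<subseteq> verts Y" using step.IH ends_subset_verts by auto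
    ultimately show ?case using assms(2,3) unfolding separated_def by blast
  qed
qed

lemma separated_subset_eq:
  "weakly_connected S \<Longrightarrow> X \<subseteq> S \<Longrightarrow> X \<noteq> {} \<Longrightarrow> separated S X \<Longrightarrow> X = S"
  using weakly_connected_separated_subset[of S S X] by auto

lemma componentsI: "Z \<subseteq> A \<Longrightarrow> weakly_connected Z \<Longrightarrow> separated A Z \<Longrightarrow> Z \<in> components A"
  unfolding components_def by auto

lemma components_subset: "Z \<in> components A \<Longrightarrow> Z \<subseteq> A"
  unfolding components_def by auto

lemma components_connected: "Z \<in> components A \<Longrightarrow> weakly_connected Z"
  unfolding components_def by auto

lemma components_separated: "Z \<in> components A \<Longrightarrow> separated A Z"
  unfolding components_def by auto

lemma components_nonempty: "Z \<in> components A \<Longrightarrow> Z \<noteq> {}"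
  unfolding components_def weakly_connected_def by auto

lemma components_eq:
  assumes Z: "Z \<in> components A" and Y: "Y \<in> components A" and "Z \<inter> Y \<noteq> {}"
  shows "Z = Y"
proof
  show "Z \<subseteq> Y"
    using weakly_connected_separated_subset[OF components_connected[OF Z] components_subset[OF Z]
        components_separated[OF Y]] assms(3) .
  show "Y \<subseteq> Z"
    using weakly_connected_separated_subset[OF components_connected[OF Y] components_subset[OF Y]
        components_separated[OF Z]] assms(3) by blast
qed

lemma components_disjoint:
  "Z \<in> components A \<Longrightarrow> Y \<in> components A \<Longrightarrow> Z \<noteq> Y \<Longrightarrow> Z \<inter> Y = {}"
  using components_eq by blast

lemma components_verts_disjoint:
  assumes "Z \<in> components A" "Y \<in> components A" "Z \<noteq> Y"
  shows "verts Z \<inter> verts Y = {}"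
proof -
  have "b \<in> A - Z" if "b \<in> Y" for b
    using that components_disjoint[OF assms] components_subset[OF assms(2)] by auto
  then have "ends b \<inter> verts Z = {}" if "b \<in> Y" for b
    using that components_separated[OF assms(1)] unfolding separated_def by auto
  then show ?thesis unfolding verts_eq_UN by blast
qed

lemma components_cover:
  assumes "a \<in> A"
  shows "\<exists>Z\<in>components A. a \<in> Z"
proof -
  define Z where "Z = {b. (a, b) \<in> (adjacent A)\<^sup>*}"
  have "Z \<subseteq> A" unfolding Z_def using reachable_in assms by auto
  have "(a, b) \<in> (adjacent Z)\<^sup>*" if "b \<in> Z" for b
  proof -
    have "(a, b) \<in> (adjacent A)\<^sup>*" using that unfolding Z_def by auto
    then show ?thesis
    proof (induction rule: rtrancl_induct)
      case base then show ?case by simp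
    next
      case (step y z)
      have "y \<in> Z" "z \<in> Z" using step unfolding Z_def by auto
      then have "(y, z) \<in> adjacent Z" using step(2) unfolding adjacent_def by auto
      then show ?case by (rule rtrancl_into_rtrancl[OF step.IH])
    qed
  qed
  then have "weakly_connected Z"
    by (intro weakly_connectedI[of a]) (auto simp: Z_def)
  moreover have "separated A Z"
    unfolding separated_def
  proof (intro ballI equals0I)
    fix b v assume b: "b \<in> A - Z" and v: "v \<in> ends b \<inter> verts Z"
    then obtain c where c: "c \<in> Z" "v \<in> ends c" unfolding verts_eq_UN by auto
    have "(c, b) \<in> adjacent A" using c b v \<open>Z \<subseteq> A\<close> by (intro adjacentI) auto
    moreover have "(a, c) \<in> (adjacent A)\<^sup>*" using c(1) unfolding Z_def by simp
    ultimately have "(a, b) \<in> (adjacent A)\<^sup>*" by simp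
    then show False using b unfolding Z_def by auto
  qed
  ultimately have "Z \<in> components A" using \<open>Z \<subseteq> A\<close> by (intro componentsI)
  moreover have "a \<in> Z" unfolding Z_def by simp
  ultimately show ?thesis by blast
qed

lemma Union_components: "\<Union>(components A) = A"
  using components_cover components_subset by blast

lemma finite_components: "finite A \<Longrightarrow> finite (components A)"
  by (rule finite_subset[of _ "Pow A"]) (auto simp: components_def)

lemma components_empty [simp]: "components {} = {}"
  using components_subset components_nonempty by blast

lemma components_of_connected: "weakly_connected A \<Longrightarrow> components A = {A}"
proof -
  assume A: "weakly_connected A"
  have "Z = A" if Z: "Z \<in> components A" for Z
    using separated_subset_eq[OF A components_subset[OF Z] components_nonempty[OF Z]
        components_separated[OF Z]] .
  moreover have "A \<in> components A"
    using A by (intro componentsI) (auto simp: separated_def)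
  ultimately show ?thesis by auto
qed

lemma weakly_connected_iff_components: "weakly_connected A \<longleftrightarrow> components A = {A}"
proof
  assume "components A = {A}"
  then show "weakly_connected A" using components_connected[of A A] by simp
qed (rule components_of_connected)

lemma two_components_if_not_connected:
  assumes "A \<noteq> {}" "\<not> weakly_connected A"
  obtains Y1 Y2 where "Y1 \<in> components A" "Y2 \<in> components A" "Y1 \<noteq> Y2"
proof -
  obtain Y1 where Y1: "Y1 \<in> components A" using assms(1) Union_components[of A] by auto
  have "components A \<noteq> {Y1}"
  proof
    assume "components A = {Y1}"
    then have "A = Y1" using Union_components[of A] by simp
    then show False using components_connected[OF Y1] assms(2) by simp
  qed
  then show ?thesis using Y1 that by blast
qed

lemma connected_subset_component:
  assumes "weakly_connected Z" "Z \<subseteq> A"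
  shows "\<exists>Y\<in>components A. Z \<subseteq> Y"
proof -
  obtain z where "z \<in> Z" using assms(1) unfolding weakly_connected_def by auto
  then obtain Y where Y: "Y \<in> components A" "z \<in> Y" using components_cover assms(2) by blast
  then have "Z \<subseteq> Y"
    using weakly_connected_separated_subset[OF assms components_separated[OF Y(1)]] \<open>z \<in> Z\<close>
    by auto
  then show ?thesis using Y(1) by blast
qed

lemma weakly_connected_Un_family:
  assumes X: "weakly_connected X"
    and T: "\<And>Z. Z \<in> T \<Longrightarrow> weakly_connected Z \<and> verts Z \<inter> verts X \<noteq> {}"
  shows "weakly_connected (X \<union> \<Union>T)"
proof -
  let ?B = "X \<union> \<Union>T"
  obtain x0 where x0: "x0 \<in> X" using X unfolding weakly_connected_def by auto
  have from_X: "(x0, b) \<in> (adjacent ?B)\<^sup>*" if "b \<in> X" for b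
    using X x0 that reachable_mono[of X ?B] unfolding weakly_connected_def by auto
  show ?thesis
  proof (rule weakly_connectedI[of x0])
    fix b assume "b \<in> ?B"
    show "(x0, b) \<in> (adjacent ?B)\<^sup>*"
    proof (cases "b \<in> X")
      case False
      then obtain Z where Z: "Z \<in> T" "b \<in> Z" using \<open>b \<in> ?B\<close> by auto
      obtain z x v where zx: "z \<in> Z" "v \<in> ends z" "x \<in> X" "v \<in> ends x"
        using T[OF Z(1)] unfolding verts_eq_UN by auto
      have "(x, z) \<in> adjacent ?B" using zx Z by (intro adjacentI) auto
      then have "(x0, z) \<in> (adjacent ?B)\<^sup>*" by (rule rtrancl_into_rtrancl[OF from_X[OF zx(3)]])
      moreover have "(z, b) \<in> (adjacent ?B)\<^sup>*"
        using T[OF Z(1)] zx Z reachable_mono[of Z ?B] unfolding weakly_connected_def by auto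
      ultimately show ?thesis by (rule rtrancl_trans)
    qed (use from_X x0 in auto)
  qed (use x0 in auto)
qed

lemma components_eqI:
  assumes F: "F \<subseteq> components A" and cover: "A \<subseteq> \<Union>F"
  shows "components A = F"
proof
  show "components A \<subseteq> F"
  proof
    fix Y assume Y: "Y \<in> components A"
    obtain b where b: "b \<in> Y" using components_nonempty[OF Y] by auto
    then obtain Z where Z: "Z \<in> F" "b \<in> Z" using cover components_subset[OF Y] by blast
    then have "Z \<in> components A" using F by blast
    then have "Y = Z" using components_eq[OF Y] b Z(2) by blast
    then show "Y \<in> F" using Z(1) by simp
  qed
qed (rule F)

lemma merged_component:
  assumes X: "weakly_connected X"
  shows "X \<union> \<Union>{Z\<in>components A. verts Z \<inter> verts X \<noteq> {}} \<in> components (A \<union> X)"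
    (is "?B \<in> _")
proof (rule componentsI)
  show "?B \<subseteq> A \<union> X" using Union_components[of A] by blast
  show "weakly_connected ?B"
  proof (rule weakly_connected_Un_family[OF X])
    fix Z assume "Z \<in> {Z\<in>components A. verts Z \<inter> verts X \<noteq> {}}"
    then show "weakly_connected Z \<and> verts Z \<inter> verts X \<noteq> {}"
      using components_connected[of Z A] by blast
  qed
  show "separated (A \<union> X) ?B"
    unfolding separated_def
  proof (intro ballI)
    fix b assume b: "b \<in> A \<union> X - ?B"
    then obtain Z where Z: "Z \<in> components A" "b \<in> Z" using components_cover by blast
    then have ZX: "verts Z \<inter> verts X = {}" using b by auto
    have "verts Z \<inter> verts Z' = {}" if "Z' \<in> components A" "verts Z' \<inter> verts X \<noteq> {}" for Z'
      using components_verts_disjoint[OF Z(1) that(1)] that(2) ZX by auto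
    then have "verts Z \<inter> verts ?B = {}" using ZX unfolding verts_Un verts_Union by auto
    then show "ends b \<inter> verts ?B = {}" using ends_subset_verts[OF Z(2)] by auto
  qed
qed

lemma untouched_component:
  assumes Z: "Z \<in> components A" and ZX: "verts Z \<inter> verts X = {}"
  shows "Z \<in> components (A \<union> X)"
proof (rule componentsI)
  show "Z \<subseteq> A \<union> X" using components_subset[OF Z] by auto
  show "weakly_connected Z" using components_connected[OF Z] .
  show "separated (A \<union> X) Z"
    unfolding separated_def
  proof (intro ballI)
    fix b assume "b \<in> A \<union> X - Z"
    then show "ends b \<inter> verts Z = {}"
      using ends_subset_verts[of b X] ZX components_separated[OF Z] unfolding separated_def by auto
  qed
qed

lemma components_Un_connected:
  fixes A X :: "'a set"
  assumes X: "weakly_connected X"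
  defines "U \<equiv> {Z\<in>components A. verts Z \<inter> verts X = {}}"
    and "B \<equiv> X \<union> \<Union>{Z\<in>components A. verts Z \<inter> verts X \<noteq> {}}"
  shows "components (A \<union> X) = insert B U" and "B \<notin> U" and "X \<subseteq> B"
proof -
  show "X \<subseteq> B" unfolding B_def by auto
  show "components (A \<union> X) = insert B U"
  proof (rule components_eqI)
    have "Z \<in> components (A \<union> X)" if "Z \<in> U" for Z
      using that untouched_component[of Z A X] unfolding U_def by blast
    then show "insert B U \<subseteq> components (A \<union> X)"
      using merged_component[OF X] unfolding B_def by blast
    show "A \<union> X \<subseteq> \<Union>(insert B U)"
    proof
      fix b assume "b \<in> A \<union> X"
      moreover have "b \<in> \<Union>(insert B U)" if "Z \<in> components A" "b \<in> Z" for Z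
        using that unfolding B_def U_def by (cases "verts Z \<inter> verts X = {}") auto
      ultimately show "b \<in> \<Union>(insert B U)"
        using Union_components[of A] unfolding B_def by blast
    qed
  qed
  have "verts X \<subseteq> verts B" "verts X \<noteq> {}"
    using \<open>X \<subseteq> B\<close> verts_mono verts_nonempty X unfolding weakly_connected_def by auto
  then show "B \<notin> U" unfolding U_def by auto
qed

lemma components_touch:
  assumes "weakly_connected (A \<union> B)" "A \<noteq> {}" "Z \<in> components B"
  shows "verts Z \<inter> verts A \<noteq> {}"
proof
  assume disj: "verts Z \<inter> verts A = {}"
  have "separated (A \<union> B) Z"
    unfolding separated_def
  proof (intro ballI)
    fix b assume b: "b \<in> A \<union> B - Z"
    show "ends b \<inter> verts Z = {}"
    proof (cases "b \<in> B")
      case True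
      then show ?thesis using b components_separated[OF assms(3)] unfolding separated_def by auto
    next
      case False
      then show ?thesis using b ends_subset_verts[of b A] disj by auto
    qed
  qed
  then have "Z = A \<union> B"
    using separated_subset_eq[OF assms(1)] components_subset[OF assms(3)]
      components_nonempty[OF assms(3)] by auto
  then show False using disj verts_mono[of A Z] verts_nonempty[OF assms(2)] by auto
qed

lemma weakly_connected_Un_touching:
  assumes "weakly_connected X" "\<And>Z. Z \<in> components A \<Longrightarrow> verts Z \<inter> verts X \<noteq> {}"
  shows "weakly_connected (A \<union> X)"
proof -
  let ?B = "X \<union> \<Union>{Z\<in>components A. verts Z \<inter> verts X \<noteq> {}}"
  have "{Z\<in>components A. verts Z \<inter> verts X = {}} = {}" using assms(2) by auto
  then have comps: "components (A \<union> X) = {?B}"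
    using components_Un_connected(1)[OF assms(1), of A] by (simp only:)
  then have "?B = A \<union> X" using Union_components[of "A \<union> X"] by auto
  then show ?thesis using comps weakly_connected_iff_components by auto
qed

definition cycle_rank :: "'a set \<Rightarrow> int" where
  "cycle_rank A = int (card A) - int (card (verts A)) + int (card (components A))"

lemma card_touching_components_le:
  assumes "finite S"
  shows "card {Z\<in>components A. verts Z \<inter> S \<noteq> {}} \<le> card (S \<inter> verts A)"
proof -
  let ?T = "{Z\<in>components A. verts Z \<inter> S \<noteq> {}}"
  define f where "f Z = (SOME v. v \<in> verts Z \<inter> S)" for Z
  have f: "f Z \<in> verts Z \<inter> S" if "Z \<in> ?T" for Z
    using that unfolding f_def by (metis (mono_tags, lifting) ex_in_conv someI_ex mem_Collect_eq)
  have "inj_on f ?T"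
  proof (rule inj_onI)
    fix Z Y assume ZY: "Z \<in> ?T" "Y \<in> ?T" "f Z = f Y"
    then have "Z \<in> components A" "Y \<in> components A" by auto
    moreover have "verts Z \<inter> verts Y \<noteq> {}" using f[OF ZY(1)] f[OF ZY(2)] ZY(3) by auto
    ultimately show "Z = Y" using components_verts_disjoint by metis
  qed
  moreover have "f ` ?T \<subseteq> S \<inter> verts A"
  proof
    fix v assume "v \<in> f ` ?T"
    then obtain Z where "Z \<in> ?T" "v = f Z" by blast
    then show "v \<in> S \<inter> verts A" using f verts_mono[OF components_subset, of Z A] by blast
  qed
  ultimately show ?thesis using assms by (simp add: card_inj_on_le)
qed

lemma cycle_rank_insert_eq:
  assumes fin: "finite A" and a: "a \<notin> A"
  shows "cycle_rank (insert a A) = cycle_rank A + 2 - int (card (ends a - verts A))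
    - int (card {Z\<in>components A. verts Z \<inter> ends a \<noteq> {}})"
proof -
  define T where "T = {Z\<in>components A. verts Z \<inter> ends a \<noteq> {}}"
  define U where "U = {Z\<in>components A. verts Z \<inter> verts {a} = {}}"
  have verts_a: "verts {a} = ends a" using verts_insert by simp
  have finc: "finite (components A)" using finite_components[OF fin] .
  have "{Z\<in>components A. verts Z \<inter> verts {a} \<noteq> {}} = T"
    unfolding T_def verts_a ..
  then have comps: "components (A \<union> {a}) = insert ({a} \<union> \<Union>T) U" "{a} \<union> \<Union>T \<notin> U"
    using components_Un_connected[OF weakly_connected_singleton[of a], where A = A]
    unfolding U_def by simp_all
  have "insert a A = A \<union> {a}" by auto
  then have card_comps: "card (components (insert a A)) = card U + 1"
    using comps finc by (simp add: U_def)
  have "components A = U \<union> T" "U \<inter> T = {}" unfolding U_def T_def verts_a by auto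
  then have card_UT: "card (components A) = card U + card T"
    using finc by (simp add: card_Un_disjoint)
  have "verts (insert a A) = verts A \<union> (ends a - verts A)" using verts_insert by auto
  also have "card \<dots> = card (verts A) + card (ends a - verts A)"
    using finite_verts[OF fin] by (intro card_Un_disjoint) auto
  finally show ?thesis
    unfolding cycle_rank_def using card_comps card_UT fin a by (simp add: T_def)
qed

lemma cycle_rank_insert:
  assumes fin: "finite A" and a: "a \<notin> A"
  shows "cycle_rank A \<le> cycle_rank (insert a A)"
    and "tail a = head a \<or> (\<exists>Z\<in>components A. ends a \<subseteq> verts Z) \<Longrightarrow>
      cycle_rank A + 1 \<le> cycle_rank (insert a A)"
proof -
  let ?T = "{Z\<in>components A. verts Z \<inter> ends a \<noteq> {}}"
  note eq = cycle_rank_insert_eq[OF fin a]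
  have card_T: "card ?T \<le> card (ends a \<inter> verts A)"
    by (rule card_touching_components_le) simp
  have card_ends: "card (ends a) = card (ends a \<inter> verts A) + card (ends a - verts A)"
    by (simp add: card_Int_Diff)
  show "cycle_rank A \<le> cycle_rank (insert a A)"
    using eq card_T card_ends card_ends_le[of a] by linarith
  assume "tail a = head a \<or> (\<exists>Z\<in>components A. ends a \<subseteq> verts Z)"
  then show "cycle_rank A + 1 \<le> cycle_rank (insert a A)"
  proof
    assume "tail a = head a"
    then show ?thesis using eq card_T card_ends card_ends_loop[of a] by linarith
  next
    assume "\<exists>Z\<in>components A. ends a \<subseteq> verts Z"
    then obtain Z0 where Z0: "Z0 \<in> components A" "ends a \<subseteq> verts Z0" by auto
    have "ends a - verts A = {}" using Z0 verts_mono[OF components_subset[OF Z0(1)]] by auto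
    then have "card (ends a - verts A) = 0" by simp
    moreover have "?T \<subseteq> {Z0}"
    proof
      fix Z assume "Z \<in> ?T"
      then have "Z \<in> components A" "verts Z \<inter> verts Z0 \<noteq> {}" using Z0(2) by auto
      then show "Z \<in> {Z0}" using components_verts_disjoint[OF _ Z0(1)] by blast
    qed
    then have "card ?T \<le> 1" using card_mono[of "{Z0}" ?T] by simp
    ultimately show ?thesis using eq by linarith
  qed
qed

lemma cycle_rank_mono:
  assumes "finite A" "B \<subseteq> A"
  shows "cycle_rank B \<le> cycle_rank A"
proof -
  have "cycle_rank B \<le> cycle_rank (B \<union> S)" if "finite S" "S \<subseteq> A - B" for S
    using that
  proof (induction S rule: finite_subset_induct')
    case empty then show ?case by simp
  next
    case (insert x S)
    then have "cycle_rank (B \<union> S) \<le> cycle_rank (insert x (B \<union> S))"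
      using assms finite_subset by (intro cycle_rank_insert(1)) auto
    then show ?case using insert by simp
  qed
  from this[of "A - B"] assms(1) show ?thesis using assms(2) by (simp add: Un_absorb1)
qed

lemma cycle_rank_connected:
  "weakly_connected K \<Longrightarrow> cycle_rank K = int (card K) - int (card (verts K)) + 1"
  unfolding cycle_rank_def using components_of_connected by simp

lemma card_verts_components:
  assumes "finite A" "finite S"
  shows "(\<Sum>Z\<in>components A. card (S \<inter> verts Z)) = card (S \<inter> verts A)"
proof -
  have "S \<inter> verts A = (\<Union>Z\<in>components A. S \<inter> verts Z)"
    using verts_Union[of "components A"] Union_components by auto
  moreover have "card (\<Union>Z\<in>components A. S \<inter> verts Z) = (\<Sum>Z\<in>components A. card (S \<inter> verts Z))"
    using components_verts_disjoint
    by (intro card_UN_disjoint) (auto simp: finite_components assms)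
  ultimately show ?thesis by simp
qed

lemma cycle_rank_components:
  assumes fin: "finite A"
  shows "cycle_rank A = (\<Sum>Z\<in>components A. cycle_rank Z)"
proof -
  have finZ: "finite Z" if "Z \<in> components A" for Z
    using fin components_subset[OF that] finite_subset by blast
  have "card A = (\<Sum>Z\<in>components A. card Z)"
    using card_Union_disjoint[of "components A"] Union_components[of A] finZ components_disjoint
    by (simp add: pairwise_def disjnt_def)
  moreover have "card (verts A) = (\<Sum>Z\<in>components A. card (verts Z))"
    using card_verts_components[OF fin finite_verts[OF fin]] verts_mono[OF components_subset]
    by (simp add: Int_absorb1)
  moreover have "(\<Sum>Z\<in>components A. cycle_rank Z) =
      (\<Sum>Z\<in>components A. int (card Z) - int (card (verts Z)) + 1)"
    using cycle_rank_connected[OF components_connected] by simp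
  ultimately show ?thesis
    unfolding cycle_rank_def by (simp add: sum.distrib sum_subtractf)
qed

end

lemma count_list_rotate1: "count_list (rotate1 xs) y = count_list xs y"
  by (cases xs) auto

lemma last_rotate_Suc: "k < length xs \<Longrightarrow> last (rotate (Suc k) xs) = xs ! k"
proof -
  assume k: "k < length xs"
  then have "xs \<noteq> []" by auto
  then have "rotate (Suc k) xs \<noteq> []" by (simp del: rotate_Suc)
  then have "last (rotate (Suc k) xs) = rotate (Suc k) xs ! (length xs - 1)"
    by (simp add: last_conv_nth del: rotate_Suc)
  also have "\<dots> = xs ! ((Suc k + (length xs - 1)) mod length xs)"
    using k by (intro nth_rotate) auto
  also have "Suc k + (length xs - 1) = k + length xs" using k by simp
  finally show ?thesis using k by simp
qed

lemma count_list_distinct: "distinct xs \<Longrightarrow> count_list xs a = (if a \<in> set xs then 1 else 0)"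
  by (induction xs) auto

lemma sum_count_list_fiber:
  assumes "finite S" "set q \<subseteq> S"
  shows "(\<Sum>a\<in>{a\<in>S. f a = v}. count_list q a) = count_list (map f q) v"
  using assms(2)
proof (induction q)
  case (Cons x q)
  have "(\<Sum>a\<in>{a\<in>S. f a = v}. count_list (x # q) a) =
      (\<Sum>a\<in>{a\<in>S. f a = v}. (if x = a then 1 else 0) + count_list q a)"
    by (intro sum.cong) auto
  also have "\<dots> = (\<Sum>a\<in>{a\<in>S. f a = v}. (if x = a then 1 else 0)) +
      (\<Sum>a\<in>{a\<in>S. f a = v}. count_list q a)"
    by (rule sum.distrib)
  also have "(\<Sum>a\<in>{a\<in>S. f a = v}. (if x = a then 1 else 0)) = (if f x = v then 1 else (0::nat))"
    using Cons.prems assms(1) by (simp add: sum.delta)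
  finally show ?case using Cons by simp
qed simp

context quiver_graph
begin

lemma closed_path_iff_rotate1:
  "closed_path Ar tail head p \<longleftrightarrow> p \<noteq> [] \<and> set p \<subseteq> Ar \<and> map head p = rotate1 (map tail p)"
proof
  assume "closed_path Ar tail head p"
  then have p: "p \<noteq> []" "set p \<subseteq> Ar" "\<And>i. Suc i < length p \<Longrightarrow> head (p ! i) = tail (p ! Suc i)"
    "tail (p ! 0) = head (last p)"
    unfolding closed_path_def is_path_def by auto
  have "map head p ! i = rotate1 (map tail p) ! i" if "i < length p" for i
  proof (cases "Suc i < length p")
    case True then show ?thesis using p that by (simp add: nth_rotate1)
  next
    case False
    then have "i = length p - 1" using that by auto
    then show ?thesis using p that by (simp add: nth_rotate1 last_conv_nth)
  qed
  then show "p \<noteq> [] \<and> set p \<subseteq> Ar \<and> map head p = rotate1 (map tail p)"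
    using p by (intro conjI nth_equalityI) auto
next
  assume h: "p \<noteq> [] \<and> set p \<subseteq> Ar \<and> map head p = rotate1 (map tail p)"
  have step: "head (p ! i) = tail (p ! (Suc i mod length p))" if "i < length p" for i
  proof -
    have "head (p ! i) = rotate1 (map tail p) ! i" using h that by (metis nth_map)
    also have "\<dots> = tail (p ! (Suc i mod length p))"
      using that by (simp add: nth_rotate1 h)
    finally show ?thesis .
  qed
  have "head (p ! i) = tail (p ! Suc i)" if "Suc i < length p" for i
    using step[of i] that by simp
  moreover have "head (last p) = tail (p ! 0)"
    using step[of "length p - 1"] h by (simp add: last_conv_nth)
  ultimately show "closed_path Ar tail head p"
    unfolding closed_path_def is_path_def using h by auto
qed

lemma closed_path_rotate:
  assumes "closed_path Ar tail head p"
  shows "closed_path Ar tail head (rotate n p)"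
proof -
  have h: "p \<noteq> []" "set p \<subseteq> Ar" "map head p = rotate1 (map tail p)"
    using assms closed_path_iff_rotate1 by auto
  have "map head (rotate n p) = rotate n (map head p)" by (simp add: rotate_map)
  also have "\<dots> = rotate1 (map tail (rotate n p))"
    using h(3) by (simp add: rotate1_rotate_swap[symmetric] rotate_map)
  finally show ?thesis using h closed_path_iff_rotate1 by auto
qed

lemma is_path_weakly_connected:
  assumes "is_path Ar tail head q"
  shows "weakly_connected (set q)"
proof (rule weakly_connectedI[of "q ! 0"])
  have q: "q \<noteq> []" "\<And>i. Suc i < length q \<Longrightarrow> head (q ! i) = tail (q ! Suc i)"
    using assms unfolding is_path_def by auto
  then show "q ! 0 \<in> set q" by simp
  have reach: "(q ! 0, q ! i) \<in> (adjacent (set q))\<^sup>*" if "i < length q" for i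
    using that
  proof (induction i)
    case (Suc i)
    have "(q ! i, q ! Suc i) \<in> adjacent (set q)"
      using q(2)[OF Suc.prems] Suc.prems by (intro adjacentI[of _ _ _ "head (q ! i)"]) (auto simp: ends_def)
    then show ?case using Suc by (simp add: rtrancl_into_rtrancl)
  qed simp
  fix b assume "b \<in> set q"
  then show "(q ! 0, b) \<in> (adjacent (set q))\<^sup>*"
    using reach by (auto simp: in_set_conv_nth)
qed

lemma primitive_closed_distinct_heads:
  assumes "primitive_closed Ar tail head p"
  shows "distinct (map head p)"
proof (subst distinct_conv_nth, intro allI impI)
  fix i j assume ij: "i < length (map head p)" "j < length (map head p)" "i \<noteq> j"
  let ?S = "{t. t < length p \<and> head (p ! t) = head (p ! i)}"
  have "head (p ! i) \<in> path_verts tail head p" unfolding path_verts_def using ij by auto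
  then have "card ?S = 1" using assms unfolding primitive_closed_def by blast
  show "map head p ! i \<noteq> map head p ! j"
  proof
    assume "map head p ! i = map head p ! j"
    then have "{i, j} \<subseteq> ?S" using ij by auto
    then have "card {i, j} \<le> card ?S" by (intro card_mono) auto
    then show False using \<open>card ?S = 1\<close> ij(3) by simp
  qed
qed

lemma primitive_closed_closed: "primitive_closed Ar tail head p \<Longrightarrow> closed_path Ar tail head p"
  unfolding primitive_closed_def by auto

lemma primitive_closed_distinct:
  "primitive_closed Ar tail head p \<Longrightarrow> distinct p"
  using primitive_closed_distinct_heads distinct_map by blast

lemma primitive_closed_verts:
  assumes "primitive_closed Ar tail head p"
  shows "verts (set p) = head ` set p" and "card (verts (set p)) = length p"
proof -
  have "map head p = rotate1 (map tail p)"
    using primitive_closed_closed[OF assms] closed_path_iff_rotate1 by auto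
  then have "set (map head p) = set (map tail p)" by simp
  then have "head ` set p = tail ` set p" by simp
  then show vh: "verts (set p) = head ` set p" unfolding arrow_verts_def by auto
  show "card (verts (set p)) = length p"
    unfolding vh using distinct_card[OF primitive_closed_distinct_heads[OF assms]] by simp
qed

lemma primitive_closed_loop:
  "primitive_closed Ar tail head p \<Longrightarrow> length p = 1 \<Longrightarrow> a \<in> set p \<Longrightarrow> tail a = head a"
  unfolding primitive_closed_def closed_path_def by (cases p) auto

lemma closed_path_snocD:
  assumes p: "closed_path Ar tail head (r @ [a])" and r: "r \<noteq> []"
  shows "is_path Ar tail head r" and "tail (hd r) = head a" and "head (last r) = tail a"
proof -
  have cons: "head ((r @ [a]) ! i) = tail ((r @ [a]) ! Suc i)" if "Suc i < Suc (length r)" for i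
    using p that unfolding closed_path_def is_path_def by auto
  show "is_path Ar tail head r"
    unfolding is_path_def
  proof (intro conjI allI impI)
    show "r \<noteq> []" "set r \<subseteq> Ar" using r p unfolding closed_path_def is_path_def by auto
    show "head (r ! i) = tail (r ! Suc i)" if "Suc i < length r" for i
      using cons[of i] that by (simp add: nth_append)
  qed
  show "tail (hd r) = head a"
    using p r unfolding closed_path_def by (simp add: hd_conv_nth nth_append)
  show "head (last r) = tail a"
    using cons[of "length r - 1"] r by (simp add: last_conv_nth nth_append)
qed

text \<open>Rotating the cycle so that \<open>a0\<close> comes last, the other arrows form a path from the head
  of \<open>a0\<close> back to its tail.\<close>

lemma primitive_closed_remove:
  assumes p: "primitive_closed Ar tail head p" and a0: "a0 \<in> set p" and len: "length p \<ge> 2"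
  shows "weakly_connected (set p - {a0})" "ends a0 \<subseteq> verts (set p - {a0})"
proof -
  obtain k where k: "k < length p" "p ! k = a0" using a0 by (metis in_set_conv_nth)
  define q where "q = rotate (Suc k) p"
  define r where "r = butlast q"
  have "q \<noteq> []" "last q = a0"
    unfolding q_def using k last_rotate_Suc[OF k(1)] by auto
  then have q_eq: "q = r @ [a0]" unfolding r_def using append_butlast_last_id by metis
  have "length (r @ [a0]) = length p" unfolding q_eq[symmetric] q_def by simp
  then have r: "r \<noteq> []" using len by auto
  have cq: "closed_path Ar tail head (r @ [a0])"
    unfolding q_eq[symmetric] q_def by (rule closed_path_rotate[OF primitive_closed_closed[OF p]])
  have "distinct (r @ [a0])"
    unfolding q_eq[symmetric] q_def using primitive_closed_distinct[OF p] by simp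
  moreover have "set (r @ [a0]) = set p" unfolding q_eq[symmetric] q_def by simp
  ultimately have sr: "set r = set p - {a0}" by auto
  show "weakly_connected (set p - {a0})"
    using is_path_weakly_connected[OF closed_path_snocD(1)[OF cq r]] sr by simp
  have "hd r \<in> set r" "last r \<in> set r" using r by auto
  then show "ends a0 \<subseteq> verts (set p - {a0})"
    using closed_path_snocD(2,3)[OF cq r] sr unfolding ends_def arrow_verts_def by force
qed

end

locale finite_quiver = quiver_graph tail head
  for tail head :: "'a \<Rightarrow> 'v" +
  fixes Ar :: "'a set"
  assumes finite_arrows: "finite Ar"
begin

definition balanced :: "('a \<Rightarrow> nat) \<Rightarrow> bool" where
  "balanced \<rho> \<longleftrightarrow> (\<forall>v. (\<Sum>a\<in>{a\<in>Ar. tail a = v}. \<rho> a) = (\<Sum>a\<in>{a\<in>Ar. head a = v}. \<rho> a))"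

lemma balanced_closed_path:
  assumes "closed_path Ar tail head q"
  shows "balanced (count_list q)"
  unfolding balanced_def
proof
  fix v
  have h: "set q \<subseteq> Ar" "map head q = rotate1 (map tail q)"
    using assms closed_path_iff_rotate1 by auto
  have "(\<Sum>a\<in>{a\<in>Ar. tail a = v}. count_list q a) = count_list (map tail q) v"
    by (rule sum_count_list_fiber[OF finite_arrows h(1)])
  also have "\<dots> = count_list (map head q) v" using h(2) by (simp add: count_list_rotate1)
  also have "\<dots> = (\<Sum>a\<in>{a\<in>Ar. head a = v}. count_list q a)"
    by (rule sum_count_list_fiber[OF finite_arrows h(1), symmetric])
  finally show "(\<Sum>a\<in>{a\<in>Ar. tail a = v}. count_list q a) = (\<Sum>a\<in>{a\<in>Ar. head a = v}. count_list q a)" .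
qed

lemma balanced_out_arrow:
  assumes "balanced \<rho>" "a \<in> Ar" "\<rho> a \<ge> 1"
  shows "\<exists>b\<in>Ar. tail b = head a \<and> \<rho> b \<ge> 1"
proof (rule ccontr)
  assume "\<not> ?thesis"
  then have "(\<Sum>b\<in>{b\<in>Ar. tail b = head a}. \<rho> b) = 0" by (intro sum.neutral) auto
  moreover have "\<rho> a \<le> (\<Sum>b\<in>{b\<in>Ar. head b = head a}. \<rho> b)"
    using assms(2) finite_arrows by (intro member_le_sum) auto
  ultimately show False using assms unfolding balanced_def by auto
qed

text \<open>Following successors inside \<open>K\<close> must revisit a head, and the walk between two visits
  is closed.\<close>

lemma closed_path_in_successor_closed:
  assumes K: "K \<subseteq> Ar" "a0 \<in> K" and succ: "\<And>a. a \<in> K \<Longrightarrow> \<exists>b\<in>K. tail b = head a"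
  shows "\<exists>q. closed_path Ar tail head q \<and> set q \<subseteq> K"
proof -
  have finK: "finite K" using K finite_arrows finite_subset by auto
  obtain nxt where nxt: "\<And>a. a \<in> K \<Longrightarrow> nxt a \<in> K \<and> tail (nxt a) = head a"
    using succ by metis
  define w where "w i = (nxt ^^ i) a0" for i
  have wK: "w i \<in> K" for i by (induction i) (auto simp: w_def K nxt)
  have wt: "tail (w (Suc i)) = head (w i)" for i using nxt wK by (simp add: w_def)
  let ?N = "card (head ` K)"
  have "\<not> inj_on (\<lambda>i. head (w i)) {0..?N}"
  proof
    assume "inj_on (\<lambda>i. head (w i)) {0..?N}"
    moreover have "(\<lambda>i. head (w i)) ` {0..?N} \<subseteq> head ` K" using wK by auto
    ultimately have "card {0..?N} \<le> ?N" using card_inj_on_le finK by blast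
    then show False by simp
  qed
  then obtain i j where ij: "i < j" "head (w i) = head (w j)"
    unfolding inj_on_def by (metis linorder_neqE_nat)
  define q where "q = map w [Suc i..<Suc j]"
  have lq: "length q = j - i" unfolding q_def by auto
  have qn: "\<And>t. t < j - i \<Longrightarrow> q ! t = w (Suc i + t)"
    unfolding q_def by (simp add: nth_map_upt del: upt_Suc)
  have "q \<noteq> []" "set q \<subseteq> K" using lq ij wK unfolding q_def by auto
  moreover have "head (q ! t) = tail (q ! Suc t)" if "Suc t < length q" for t
    using that lq qn wt by auto
  moreover have "tail (q ! 0) = head (last q)"
    using lq qn[of 0] qn[of "j - i - 1"] ij wt \<open>q \<noteq> []\<close> by (simp add: last_conv_nth)
  ultimately show ?thesis unfolding closed_path_def is_path_def using K(1) by blast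
qed

text \<open>A closed path that is not primitive passes twice through a head; the stretch between
  the two visits is a shorter closed path.\<close>

lemma primitive_closed_in_closed:
  "closed_path Ar tail head q \<Longrightarrow> set q \<subseteq> K \<Longrightarrow> \<exists>p. primitive_closed Ar tail head p \<and> set p \<subseteq> K"
proof (induction "length q" arbitrary: q rule: less_induct)
  case less
  show ?case
  proof (cases "primitive_closed Ar tail head q")
    case False
    have cq: "q \<noteq> []" "set q \<subseteq> Ar" "\<And>i. Suc i < length q \<Longrightarrow> head (q ! i) = tail (q ! Suc i)"
      "tail (q ! 0) = head (last q)" using less(2) unfolding closed_path_def is_path_def by auto
    then obtain v where v: "v \<in> path_verts tail head q" "card {i. i < length q \<and> head (q ! i) = v} \<noteq> 1"
      using False less(2) unfolding primitive_closed_def by auto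
    let ?S = "{i. i < length q \<and> head (q ! i) = v}"
    have "v \<in> head ` set q"
      using v(1) cq(1,4) unfolding path_verts_def by (auto simp: last_in_set)
    then have "?S \<noteq> {}" by (auto simp: in_set_conv_nth)
    then have "\<not> card ?S \<le> Suc 0" using v(2) by (simp add: le_Suc_eq card_0_eq)
    then obtain i j where ij: "i < j" "j < length q" "head (q ! i) = v" "head (q ! j) = v"
      unfolding card_le_Suc0_iff_eq[OF finite_Collect_conjI[OF disjI1[OF finite_Collect_less_nat]]]
      by (metis (mono_tags, lifting) linorder_neqE_nat mem_Collect_eq)
    define r where "r = take (j - i) (drop (Suc i) q)"
    have lr: "length r = j - i" and rn: "\<And>t. t < j - i \<Longrightarrow> r ! t = q ! (Suc i + t)"
      unfolding r_def using ij by auto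
    have sr: "set r \<subseteq> set q" unfolding r_def by (meson in_set_dropD in_set_takeD subsetI)
    have "closed_path Ar tail head r"
      unfolding closed_path_def is_path_def
    proof (intro conjI allI impI)
      show "r \<noteq> []" "set r \<subseteq> Ar" using lr ij sr cq(2) by auto
      show "head (r ! t) = tail (r ! Suc t)" if "Suc t < length r" for t
        using that rn lr cq(3)[of "Suc i + t"] ij by auto
      have "r \<noteq> []" using lr ij by auto
      then have "last r = r ! (j - i - 1)" using lr by (simp add: last_conv_nth)
      also have "\<dots> = q ! j" using rn[of "j - i - 1"] ij by simp
      finally show "tail (r ! 0) = head (last r)" using rn[of 0] ij cq(3)[of i] by simp
    qed
    moreover have "length r < length q" using lr ij by simp
    ultimately show ?thesis using less(1)[of r] sr less(3) by auto
  qed (use less in auto)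
qed

lemma primitive_closed_in_support:
  assumes "balanced \<rho>" "a0 \<in> Ar" "\<rho> a0 \<ge> 1"
  shows "\<exists>p. primitive_closed Ar tail head p \<and> set p \<subseteq> {a\<in>Ar. \<rho> a \<ge> 1}"
proof -
  have "\<exists>q. closed_path Ar tail head q \<and> set q \<subseteq> {a\<in>Ar. \<rho> a \<ge> 1}"
    using assms balanced_out_arrow by (intro closed_path_in_successor_closed[of _ a0]) auto
  then show ?thesis using primitive_closed_in_closed by blast
qed

end

context finite_quiver
begin

abbreviation supp :: "('a \<Rightarrow> nat) \<Rightarrow> 'a set" where
  "supp f \<equiv> supp_arrows Ar f"

lemma supp_subset: "supp f \<subseteq> Ar"
  unfolding supp_arrows_def by auto

lemma finite_supp: "finite (supp f)"
  using finite_subset[OF supp_subset finite_arrows] .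

lemma mem_supp_iff: "a \<in> supp f \<longleftrightarrow> a \<in> Ar \<and> f a \<ge> 1"
  unfolding supp_arrows_def by auto

text \<open>No arrow of the support outside a component touches its vertices, so restricting a
  balanced vector to a component of its support keeps every vertex balanced.\<close>

lemma balanced_restrict_component:
  assumes bal: "balanced \<rho>" and Z: "Z \<in> components (supp \<rho>)"
  shows "balanced (\<lambda>a. if a \<in> Z then \<rho> a else 0)"
  unfolding balanced_def
proof
  fix v
  show "(\<Sum>a\<in>{a\<in>Ar. tail a = v}. if a \<in> Z then \<rho> a else 0) =
        (\<Sum>a\<in>{a\<in>Ar. head a = v}. if a \<in> Z then \<rho> a else 0)"
  proof (cases "v \<in> verts Z")
    case True
    have zero: "\<rho> a = 0" if "a \<in> Ar" "a \<notin> Z" "v \<in> ends a" for a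
    proof (rule ccontr)
      assume "\<rho> a \<noteq> 0"
      then have "a \<in> supp \<rho> - Z" using that mem_supp_iff by auto
      then show False
        using components_separated[OF Z] True that(3) unfolding separated_def by auto
    qed
    have "(\<Sum>a\<in>{a\<in>Ar. tail a = v}. if a \<in> Z then \<rho> a else 0) = (\<Sum>a\<in>{a\<in>Ar. tail a = v}. \<rho> a)"
      using zero by (intro sum.cong) (auto simp: ends_def)
    moreover have "(\<Sum>a\<in>{a\<in>Ar. head a = v}. if a \<in> Z then \<rho> a else 0) = (\<Sum>a\<in>{a\<in>Ar. head a = v}. \<rho> a)"
      using zero by (intro sum.cong) (auto simp: ends_def)
    ultimately show ?thesis using bal unfolding balanced_def by simp
  next
    case False
    then have "a \<notin> Z" if "tail a = v \<or> head a = v" for a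
      using that ends_subset_verts[of a Z] unfolding ends_def by auto
    then show ?thesis by (auto intro!: sum.neutral)
  qed
qed

lemma sum_over_components:
  "(\<Sum>a\<in>Ar. \<rho> a) = (\<Sum>Z\<in>components (supp \<rho>). \<Sum>a\<in>Ar. if a \<in> Z then \<rho> a else 0)"
proof -
  have finZ: "\<forall>Z\<in>components (supp \<rho>). finite Z"
    using finite_subset[OF components_subset finite_supp] by blast
  have disj: "\<forall>A\<in>components (supp \<rho>). \<forall>B\<in>components (supp \<rho>). A \<noteq> B \<longrightarrow> A \<inter> B = {}"
    using components_disjoint by blast
  have "(\<Sum>a\<in>Ar. \<rho> a) = (\<Sum>a\<in>supp \<rho>. \<rho> a)"
    by (rule sum.mono_neutral_right) (auto simp: finite_arrows supp_subset mem_supp_iff)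
  also have "\<dots> = (\<Sum>Z\<in>components (supp \<rho>). \<Sum>a\<in>Z. \<rho> a)"
    using sum.Union_disjoint[OF finZ disj, of \<rho>] Union_components[of "supp \<rho>"] by (simp add: o_def)
  also have "\<dots> = (\<Sum>Z\<in>components (supp \<rho>). \<Sum>a\<in>Ar. if a \<in> Z then \<rho> a else 0)"
  proof (rule sum.cong)
    fix Z assume "Z \<in> components (supp \<rho>)"
    then have "Ar \<inter> Z = Z" using components_subset supp_subset by blast
    then show "(\<Sum>a\<in>Z. \<rho> a) = (\<Sum>a\<in>Ar. if a \<in> Z then \<rho> a else 0)"
      using sum.inter_restrict[OF finite_arrows, of \<rho> Z] by simp
  qed simp
  finally show ?thesis .
qed

end

text \<open>What the proof uses of \<open>\<delta> \<in> \<Omega>\<^sub>2(Q)\<close>; \<open>M\<close> plays the role of \<open>m(Q)\<close>.\<close>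

locale omega2_quiver = finite_quiver tail head Ar
  for tail head :: "'a \<Rightarrow> 'v" and Ar :: "'a set" +
  fixes \<delta> :: "'a \<Rightarrow> nat" and M :: nat
  assumes delta_pos: "\<And>a. a \<in> Ar \<Longrightarrow> \<delta> a \<ge> 1"
    and delta_balanced: "balanced \<delta>"
    and arrows_connected: "weakly_connected Ar"
    and double_cycle_splits: "\<And>p. primitive_closed Ar tail head p \<Longrightarrow> \<forall>a\<in>set p. \<delta> a \<ge> 2 \<Longrightarrow>
      supp_arrows Ar (\<lambda>b. \<delta> b - 2 * count_list p b) \<noteq> {} \<and>
      \<not> weakly_connected (supp_arrows Ar (\<lambda>b. \<delta> b - 2 * count_list p b))"
    and cycle_length_le: "\<And>p. primitive_closed Ar tail head p \<Longrightarrow> length p \<le> M"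
    and M_le_card_verts: "M \<le> card (verts Ar)"
begin

text \<open>The induction invariant is \<open>|\<rho>| \<le> potential (supp \<rho>) (supp (\<delta> - \<rho>))\<close>.\<close>

definition slack :: "'a set \<Rightarrow> 'a set \<Rightarrow> nat" where
  "slack K Y = M - card (verts Y \<inter> verts K)"

definition potential :: "'a set \<Rightarrow> 'a set \<Rightarrow> int" where
  "potential K R = int M * cycle_rank K + 2 * int (card (verts K)) - 2 * int M
     + int (\<Sum>Y\<in>components R. slack K Y)"

text \<open>Merging a connected \<open>X \<supseteq> W\<close> into \<open>R\<close> replaces the components of \<open>R\<close> touching \<open>X\<close>
  by a single one containing \<open>W\<close>.\<close>

lemma slack_sum_Un_connected:
  assumes X: "weakly_connected X" "finite X" and W: "W \<subseteq> X" and fin: "finite R"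
    and K: "verts K \<subseteq> verts Z \<union> verts X"
  shows "(\<Sum>Y\<in>components (R \<union> X). slack Z Y) \<le>
      (M - card (verts W \<inter> verts Z)) + (\<Sum>Y\<in>{Y\<in>components R. verts Y \<inter> verts X = {}}. slack K Y)"
proof -
  let ?U = "{Y\<in>components R. verts Y \<inter> verts X = {}}"
  let ?B = "X \<union> \<Union>{Y\<in>components R. verts Y \<inter> verts X \<noteq> {}}"
  have comps: "components (R \<union> X) = insert ?B ?U" "?B \<notin> ?U" "X \<subseteq> ?B"
    using components_Un_connected[OF X(1), of R] by auto
  have finU: "finite ?U" using finite_components[OF fin] by auto
  have "?B \<subseteq> R \<union> X" using Union_components[of R] by blast
  then have finB: "finite ?B" using fin X(2) finite_subset by blast
  have "card (verts W \<inter> verts Z) \<le> card (verts ?B \<inter> verts Z)"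
    using verts_mono[of W ?B] W comps(3) finite_verts[OF finB] by (intro card_mono) auto
  then have "slack Z ?B \<le> M - card (verts W \<inter> verts Z)" unfolding slack_def by simp
  moreover have "(\<Sum>Y\<in>?U. slack Z Y) \<le> (\<Sum>Y\<in>?U. slack K Y)"
  proof (rule sum_mono)
    fix Y assume Y: "Y \<in> ?U"
    then have "finite Y" using finite_subset[OF components_subset fin] by blast
    moreover have "verts Y \<inter> verts K \<subseteq> verts Y \<inter> verts Z" using Y K by auto
    ultimately have "card (verts Y \<inter> verts K) \<le> card (verts Y \<inter> verts Z)"
      by (intro card_mono) (auto simp: finite_verts)
    then show "slack Z Y \<le> slack K Y" unfolding slack_def by simp
  qed
  ultimately show ?thesis using comps finU by simp
qed


lemma slack_sum_two_components:
  assumes fin: "finite R" "finite K" and K: "card (verts K) \<le> M"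
    and Y: "Y1 \<in> components R" "Y2 \<in> components R" "Y1 \<noteq> Y2"
  shows "M \<le> (\<Sum>Y\<in>components R. slack K Y)"
proof -
  have finK: "finite (verts K)" using finite_verts[OF fin(2)] .
  have "(verts Y1 \<inter> verts K) \<inter> (verts Y2 \<inter> verts K) = {}"
    using components_verts_disjoint[OF Y] by blast
  then have "card (verts Y1 \<inter> verts K) + card (verts Y2 \<inter> verts K)
      = card ((verts Y1 \<inter> verts K) \<union> (verts Y2 \<inter> verts K))"
    using finK by (intro card_Un_disjoint[symmetric]) auto
  also have "\<dots> \<le> card (verts K)" using finK by (intro card_mono) auto
  finally have "M \<le> slack K Y1 + slack K Y2" using K unfolding slack_def by linarith
  also have "\<dots> = (\<Sum>Y\<in>{Y1, Y2}. slack K Y)" using Y(3) by simp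
  also have "\<dots> \<le> (\<Sum>Y\<in>components R. slack K Y)"
    using Y finite_components[OF fin(1)] by (intro sum_mono2) auto
  finally show ?thesis .
qed

lemma sum_potential_components:
  assumes "finite S"
  shows "(\<Sum>Z\<in>components S. potential Z (g Z)) =
    int M * cycle_rank S + 2 * int (card (verts S)) - 2 * (int M * int (card (components S)))
      + int (\<Sum>Z\<in>components S. \<Sum>Y\<in>components (g Z). slack Z Y)"
proof -
  have "(\<Sum>Z\<in>components S. int (card (verts Z))) = int (card (verts S))"
    using card_verts_components[OF assms finite_verts[OF assms]]
      verts_mono[OF components_subset[of _ S]]
    by (simp add: Int_absorb1 flip: of_nat_sum)
  then show ?thesis
    unfolding potential_def cycle_rank_components[OF assms]
    by (simp add: sum.distrib sum_subtractf sum_distrib_left[symmetric] of_nat_sum)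
qed

end

text \<open>Each component \<open>Z\<close> of the support \<open>K'\<close> of the remainder \<open>rest\<close>
  gives a smaller instance \<open>child Z\<close>, for which the rest of \<open>K\<close>, namely \<open>others Z\<close>, has
  become part of the support of \<open>\<delta>\<close> minus the instance.\<close>

locale peeling = omega2_quiver tail head Ar \<delta> M
  for tail head :: "'a \<Rightarrow> 'v" and Ar :: "'a set" and \<delta> :: "'a \<Rightarrow> nat" and M :: nat +
  fixes \<rho> :: "'a \<Rightarrow> nat" and p :: "'a list"
  assumes rho_le_delta: "\<And>a. a \<in> Ar \<Longrightarrow> \<rho> a \<le> \<delta> a"
    and rho_balanced: "balanced \<rho>"
    and support_connected: "weakly_connected (supp \<rho>)"
    and cycle_primitive: "primitive_closed Ar tail head p"
    and cycle_in_support: "set p \<subseteq> supp \<rho>"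
begin

abbreviation K :: "'a set" where "K \<equiv> supp \<rho>"

abbreviation R :: "'a set" where "R \<equiv> supp (\<lambda>a. \<delta> a - \<rho> a)"

abbreviation C :: "'a set" where "C \<equiv> set p"

definition mult :: nat where
  "mult = (if \<forall>a\<in>C. \<rho> a \<ge> 2 then 2 else 1)"

definition rest :: "'a \<Rightarrow> nat" where
  "rest a = \<rho> a - mult * count_list p a"

abbreviation K' :: "'a set" where "K' \<equiv> supp rest"

definition others :: "'a set \<Rightarrow> 'a set" where
  "others Z = C \<union> (K' - Z)"

definition child :: "'a set \<Rightarrow> 'a \<Rightarrow> nat" where
  "child Z a = (if a \<in> Z then rest a else 0)"

lemma arrows_eq_Un: "Ar = K \<union> R"
proof
  show "Ar \<subseteq> K \<union> R"
  proof
    fix a assume "a \<in> Ar"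
    then show "a \<in> K \<union> R" using delta_pos[of a] mem_supp_iff by (cases "\<rho> a \<ge> 1") auto
  qed
qed (auto simp: supp_subset)

lemma support_nonempty: "K \<noteq> {}"
  using support_connected unfolding weakly_connected_def by simp

lemma residual_components_touch: "Y \<in> components R \<Longrightarrow> verts Y \<inter> verts K \<noteq> {}"
  using components_touch[of K R] arrows_connected arrows_eq_Un support_nonempty by auto

lemma count_cycle: "count_list p a = (if a \<in> C then 1 else 0)"
  using count_list_distinct[OF primitive_closed_distinct[OF cycle_primitive]] .

lemma card_verts_cycle: "card (verts C) = length p"
  using primitive_closed_verts(2)[OF cycle_primitive] .

lemma cycle_length: "1 \<le> length p" "length p \<le> M"
  using cycle_primitive cycle_length_le unfolding primitive_closed_def closed_path_def is_path_def
  by (auto simp: Suc_le_eq)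

lemma cycle_connected: "weakly_connected C"
  using cycle_primitive is_path_weakly_connected
  unfolding primitive_closed_def closed_path_def by blast

lemma mult_cases: "mult = 1 \<or> mult = 2"
  unfolding mult_def by auto

lemma mult_le_rho: "a \<in> C \<Longrightarrow> mult \<le> \<rho> a"
  using cycle_in_support mem_supp_iff unfolding mult_def by fastforce

lemma sum_rho_eq: "(\<Sum>a\<in>Ar. \<rho> a) = mult * length p + (\<Sum>a\<in>Ar. rest a)"
proof -
  have "(\<Sum>a\<in>Ar. \<rho> a) = (\<Sum>a\<in>Ar. rest a + mult * count_list p a)"
    using mult_le_rho by (intro sum.cong) (auto simp: rest_def count_cycle)
  also have "\<dots> = (\<Sum>a\<in>Ar. rest a) + mult * (\<Sum>a\<in>Ar. count_list p a)"
    by (simp add: sum.distrib sum_distrib_left)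
  also have "(\<Sum>a\<in>Ar. count_list p a) = length p"
    using primitive_closed_closed[OF cycle_primitive] finite_arrows
    unfolding closed_path_def is_path_def by (intro sum_count_set) auto
  finally show ?thesis by simp
qed

lemma rest_balanced: "balanced rest"
  unfolding balanced_def
proof
  fix v
  have le: "mult * count_list p a \<le> \<rho> a" for a
    using mult_le_rho by (auto simp: count_cycle)
  have "balanced (count_list p)"
    using balanced_closed_path[OF primitive_closed_closed[OF cycle_primitive]] .
  then show "(\<Sum>a\<in>{a\<in>Ar. tail a = v}. rest a) = (\<Sum>a\<in>{a\<in>Ar. head a = v}. rest a)"
    using rho_balanced le unfolding balanced_def rest_def
    by (simp add: sum_subtractf_nat sum_distrib_left[symmetric])
qed

lemma rest_support_subset: "K' \<subseteq> K"
  unfolding rest_def supp_arrows_def by auto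

lemma support_eq_Un: "K = C \<union> K'"
  using cycle_in_support rest_support_subset
  by (auto simp: mem_supp_iff rest_def count_cycle split: if_splits)

lemma double_peel_splits:
  assumes "mult = 2"
  shows "R \<union> K' \<noteq> {}" and "\<not> weakly_connected (R \<union> K')"
proof -
  have "\<forall>a\<in>C. \<delta> a \<ge> 2"
    using assms mult_le_rho rho_le_delta cycle_in_support supp_subset by (metis le_trans subsetD)
  moreover have "\<delta> b - 2 * count_list p b = (\<delta> b - \<rho> b) + rest b" if "b \<in> Ar" for b
    using assms mult_le_rho[of b] rho_le_delta[OF that] by (auto simp: rest_def count_cycle)
  then have "supp (\<lambda>b. \<delta> b - 2 * count_list p b) = R \<union> K'"
    unfolding supp_arrows_def by auto
  ultimately show "R \<union> K' \<noteq> {}" "\<not> weakly_connected (R \<union> K')"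
    using double_cycle_splits[OF cycle_primitive] by auto
qed

lemma cycle_arrow_not_in_rest: "\<exists>a0\<in>C. a0 \<notin> K'"
proof (cases "mult = 2")
  case True
  show ?thesis
  proof (rule ccontr)
    assume "\<not> ?thesis"
    then have "R \<union> K' = Ar" using support_eq_Un arrows_eq_Un rest_support_subset by auto
    then show False using double_peel_splits(2)[OF True] arrows_connected by simp
  qed
next
  case False
  then have "mult = 1" using mult_cases by simp
  moreover obtain a where "a \<in> C" "\<rho> a < 2"
    using False unfolding mult_def by (auto split: if_splits simp: not_le)
  ultimately have "rest a = 0" by (simp add: rest_def count_cycle)
  then show ?thesis using \<open>a \<in> C\<close> mem_supp_iff[of a rest] by auto
qed

text \<open>Some arrow \<open>a0\<close> of the cycle disappears from the support, and it closes a cycle in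
  \<open>K - {a0}\<close>: either it is a loop or the rest of the cycle joins its endpoints.\<close>

lemma cycle_rank_rest: "cycle_rank K' + 1 \<le> cycle_rank K"
proof -
  obtain a0 where a0: "a0 \<in> C" "a0 \<notin> K'" using cycle_arrow_not_in_rest by blast
  have fin: "finite (K - {a0})" using finite_supp by simp
  have "tail a0 = head a0 \<or> (\<exists>Z\<in>components (K - {a0}). ends a0 \<subseteq> verts Z)"
  proof (cases "length p = 1")
    case True
    then show ?thesis using primitive_closed_loop[OF cycle_primitive] a0 by auto
  next
    case False
    then have "length p \<ge> 2" using cycle_length(1) by simp
    then have "weakly_connected (C - {a0})" "ends a0 \<subseteq> verts (C - {a0})"
      using primitive_closed_remove[OF cycle_primitive a0(1)] by auto
    moreover have "C - {a0} \<subseteq> K - {a0}" using cycle_in_support by auto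
    ultimately obtain Z where "Z \<in> components (K - {a0})" "C - {a0} \<subseteq> Z"
      using connected_subset_component by blast
    then show ?thesis using \<open>ends a0 \<subseteq> verts (C - {a0})\<close> verts_mono[of "C - {a0}" Z] by blast
  qed
  then have "cycle_rank (K - {a0}) + 1 \<le> cycle_rank (insert a0 (K - {a0}))"
    using cycle_rank_insert(2)[OF fin, of a0] by blast
  moreover have "insert a0 (K - {a0}) = K" using a0 cycle_in_support by auto
  moreover have "cycle_rank K' \<le> cycle_rank (K - {a0})"
    using cycle_rank_mono[OF fin] rest_support_subset a0(2) by auto
  ultimately show ?thesis by simp
qed

lemma child_support: "Z \<in> components K' \<Longrightarrow> supp (child Z) = Z"
  using components_subset[of Z K'] unfolding child_def supp_arrows_def by auto

lemma child_balanced: "Z \<in> components K' \<Longrightarrow> balanced (child Z)"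
  using balanced_restrict_component[OF rest_balanced] unfolding child_def by blast

lemma child_le_delta: "a \<in> Ar \<Longrightarrow> child Z a \<le> \<delta> a"
  using rho_le_delta[of a] unfolding child_def rest_def by auto

lemma sum_child_less: "(\<Sum>a\<in>Ar. child Z a) < (\<Sum>a\<in>Ar. \<rho> a)"
proof -
  have "(\<Sum>a\<in>Ar. child Z a) \<le> (\<Sum>a\<in>Ar. rest a)"
    unfolding child_def by (intro sum_mono) auto
  then show ?thesis using sum_rho_eq cycle_length(1) mult_cases by auto
qed

lemma sum_rest_children: "(\<Sum>a\<in>Ar. rest a) = (\<Sum>Z\<in>components K'. \<Sum>a\<in>Ar. child Z a)"
  using sum_over_components[of rest] unfolding child_def .

lemma child_residual_support:
  assumes Z: "Z \<in> components K'"
  shows "supp (\<lambda>a. \<delta> a - child Z a) = R \<union> others Z"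
proof (rule set_eqI)
  fix a
  have "Z \<subseteq> K'" using components_subset[OF Z] .
  then show "a \<in> supp (\<lambda>a. \<delta> a - child Z a) \<longleftrightarrow> a \<in> R \<union> others Z"
    using arrows_eq_Un support_eq_Un delta_pos[of a] rho_le_delta[of a] mult_le_rho[of a] mult_cases
    unfolding others_def child_def supp_arrows_def rest_def count_cycle by auto
qed

end

context peeling
begin

definition far :: "'a set \<Rightarrow> 'a set set" where
  "far Z = {Y\<in>components R. verts Y \<inter> verts (others Z) = {}}"

definition common_slack :: nat where
  "common_slack = (\<Sum>Y\<in>components R - (\<Union>Z\<in>components K'. far Z). slack K Y)"

lemma others_connected:
  assumes Z: "Z \<in> components K'"
  shows "weakly_connected (others Z)"
proof -
  have "C \<noteq> {}" using cycle_connected unfolding weakly_connected_def by simp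
  moreover have "weakly_connected (C \<union> K')" using support_connected support_eq_Un by simp
  ultimately have touch: "verts Y \<inter> verts C \<noteq> {}" if "Y \<in> components K'" for Y
    using components_touch that by blast
  have "weakly_connected (C \<union> \<Union>(components K' - {Z}))"
  proof (rule weakly_connected_Un_family[OF cycle_connected])
    fix Y assume "Y \<in> components K' - {Z}"
    then show "weakly_connected Y \<and> verts Y \<inter> verts C \<noteq> {}"
      using components_connected[of Y K'] touch[of Y] by blast
  qed
  moreover have "\<Union>(components K' - {Z}) = K' - Z"
  proof
    show "\<Union>(components K' - {Z}) \<subseteq> K' - Z"
    proof
      fix a assume "a \<in> \<Union>(components K' - {Z})"
      then obtain Y where "Y \<in> components K'" "Y \<noteq> Z" "a \<in> Y" by blast
      then show "a \<in> K' - Z"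
        using components_subset[of Y K'] components_disjoint[OF Z, of Y] by blast
    qed
    show "K' - Z \<subseteq> \<Union>(components K' - {Z})" using Union_components[of K'] by blast
  qed
  ultimately show ?thesis unfolding others_def by simp
qed

lemma verts_support_subset: "verts K \<subseteq> verts Z \<union> verts (others Z)"
proof -
  have "K \<subseteq> Z \<union> others Z" using support_eq_Un unfolding others_def by auto
  then show ?thesis using verts_mono verts_Un by metis
qed

lemma child_slack_le:
  assumes "Z \<in> components K'"
  shows "(\<Sum>Y\<in>components (R \<union> others Z). slack Z Y) \<le>
    (M - card (verts C \<inter> verts Z)) + (\<Sum>Y\<in>far Z. slack K Y)"
  unfolding far_def
proof (rule slack_sum_Un_connected[OF others_connected[OF assms]])
  show "finite (others Z)" unfolding others_def using finite_supp by simp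
  show "C \<subseteq> others Z" unfolding others_def by auto
  show "finite R" by (rule finite_supp)
  show "verts K \<subseteq> verts Z \<union> verts (others Z)" by (rule verts_support_subset)
qed

text \<open>Two different components of \<open>K'\<close> each lie in the other's \<open>others\<close>, so a component of
  \<open>R\<close> far from both would miss \<open>verts K\<close>.\<close>

lemma far_disjoint:
  assumes Z: "Z1 \<in> components K'" "Z2 \<in> components K'" "Z1 \<noteq> Z2"
  shows "far Z1 \<inter> far Z2 = {}"
proof (rule ccontr)
  assume "far Z1 \<inter> far Z2 \<noteq> {}"
  then obtain Y where Y: "Y \<in> components R" "verts Y \<inter> verts (others Z1) = {}"
    "verts Y \<inter> verts (others Z2) = {}"
    unfolding far_def by auto
  have "Z2 \<subseteq> others Z1" "Z1 \<subseteq> others Z2"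
    using components_subset[OF Z(1)] components_subset[OF Z(2)] components_disjoint[OF Z]
    unfolding others_def by auto
  then have "verts K \<subseteq> verts (others Z1) \<union> verts (others Z2)"
    using verts_support_subset[of Z1] verts_mono by blast
  then show False using Y residual_components_touch[OF Y(1)] by blast
qed

lemma children_slack_le:
  "(\<Sum>Z\<in>components K'. \<Sum>Y\<in>components (R \<union> others Z). slack Z Y)
     + card (verts C \<inter> verts K') + common_slack
   \<le> M * card (components K') + (\<Sum>Y\<in>components R. slack K Y)"
proof -
  let ?F = "\<Union>Z\<in>components K'. far Z"
  have finC: "finite (components K')" using finite_components[OF finite_supp] .
  have finR: "finite (components R)" using finite_components[OF finite_supp] .
  have "(\<Sum>Z\<in>components K'. M - card (verts C \<inter> verts Z))
      + (\<Sum>Z\<in>components K'. card (verts C \<inter> verts Z)) = M * card (components K')"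
  proof -
    have "card (verts C \<inter> verts Z) \<le> M" for Z
      using card_mono[of "verts C" "verts C \<inter> verts Z"] finite_verts[of C]
        card_verts_cycle cycle_length(2) by auto
    then show ?thesis by (simp add: mult.commute flip: sum.distrib)
  qed
  moreover have "(\<Sum>Z\<in>components K'. card (verts C \<inter> verts Z)) = card (verts C \<inter> verts K')"
    using card_verts_components[OF finite_supp finite_verts] by simp
  moreover have "(\<Sum>Z\<in>components K'. \<Sum>Y\<in>far Z. slack K Y) = (\<Sum>Y\<in>?F. slack K Y)"
    using finR far_disjoint unfolding far_def
    by (intro sum.UNION_disjoint[symmetric] finC) auto
  moreover have "?F \<subseteq> components R" unfolding far_def by auto
  then have "(\<Sum>Y\<in>components R. slack K Y) = common_slack + (\<Sum>Y\<in>?F. slack K Y)"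
    unfolding common_slack_def using sum.subset_diff finR by blast
  moreover have "(\<Sum>Z\<in>components K'. \<Sum>Y\<in>components (R \<union> others Z). slack Z Y)
      \<le> (\<Sum>Z\<in>components K'. (M - card (verts C \<inter> verts Z)) + (\<Sum>Y\<in>far Z. slack K Y))"
    using child_slack_le by (intro sum_mono)
  ultimately show ?thesis by (simp add: sum.distrib)
qed

lemma card_verts_support: "card (verts K) = card (verts K') + card (verts K - verts K')"
  using card_Int_Diff[of "verts K" "verts K'"] verts_mono[OF rest_support_subset]
    finite_verts[OF finite_supp] by (simp add: Int_absorb1)

lemma length_cycle_split: "length p = card (verts C \<inter> verts K') + card (verts K - verts K')"
proof -
  have "verts K - verts K' = verts C - verts K'"
    using support_eq_Un verts_Un by auto
  then show ?thesis
    using card_Int_Diff[OF finite_verts[OF List.finite_set], of p "verts K'"] card_verts_cycle by simp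
qed

text \<open>Without remainder, \<open>K\<close> is the cycle, and every component of \<open>R\<close> has slack at least
  \<open>M - |p|\<close>; when the cycle was peeled twice, \<open>R\<close> has two components with disjoint vertex
  sets.\<close>

lemma rest_empty_bound:
  assumes "K' = {}"
  shows "mult * length p + M \<le> 2 * length p + (\<Sum>Y\<in>components R. slack K Y)"
proof -
  have KC: "K = C" using support_eq_Un assms by simp
  have finR: "finite (components R)" using finite_components[OF finite_supp] .
  have slack_ge: "M - length p \<le> slack K Y" for Y
  proof -
    have "card (verts Y \<inter> verts K) \<le> card (verts K)"
      using finite_verts[OF finite_supp] by (intro card_mono) auto
    then show ?thesis using card_verts_cycle KC unfolding slack_def by simp
  qed
  show ?thesis
  proof (cases "mult = 2")
    case True
    have "R \<noteq> {}" "\<not> weakly_connected R" using double_peel_splits[OF True] assms by auto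
    then obtain Y1 Y2 where "Y1 \<in> components R" "Y2 \<in> components R" "Y1 \<noteq> Y2"
      by (rule two_components_if_not_connected)
    moreover have "card (verts K) \<le> M" using KC card_verts_cycle cycle_length(2) by simp
    ultimately have "M \<le> (\<Sum>Y\<in>components R. slack K Y)"
      using slack_sum_two_components finite_supp by blast
    then show ?thesis using True by simp
  next
    case False
    then have "mult = 1" using mult_cases by simp
    show ?thesis
    proof (cases "R = {}")
      case True
      then have "Ar = C" using arrows_eq_Un KC by simp
      then show ?thesis using M_le_card_verts card_verts_cycle \<open>mult = 1\<close> by simp
    next
      case False
      then obtain Y where "Y \<in> components R" using Union_components[of R] by auto
      then have "slack K Y \<le> (\<Sum>Y\<in>components R. slack K Y)"
        using finR by (intro member_le_sum) auto
      then show ?thesis using slack_ge[of Y] \<open>mult = 1\<close> by simp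
    qed
  qed
qed

text \<open>If \<open>K'\<close> is connected and the cycle was peeled twice, \<open>R \<union> K'\<close> is disconnected, so some
  component of \<open>R\<close> misses \<open>K'\<close>; it touches \<open>K\<close> only in vertices of the cycle outside
  \<open>K'\<close>, and it is not far from \<open>K'\<close>.\<close>

lemma rest_connected_bound:
  assumes r: "card (components K') = 1" and m: "mult = 2"
  shows "card (verts C \<inter> verts K') \<le> common_slack"
proof -
  obtain Z where cz: "components K' = {Z}" using r by (auto simp: card_1_singleton_iff)
  then have KZ: "K' = Z" and Z: "Z \<in> components K'" using Union_components[of K'] by auto
  obtain Y where Y: "Y \<in> components R" "verts Y \<inter> verts Z = {}"
    using weakly_connected_Un_touching[OF components_connected[OF Z], of R]
      double_peel_splits(2)[OF m] KZ by auto
  have "others Z = C" unfolding others_def using KZ by auto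
  then have "Y \<notin> (\<Union>Z\<in>components K'. far Z)"
    using cz residual_components_touch[OF Y(1)] support_eq_Un Y(2) KZ
    unfolding far_def by (auto simp: verts_Un)
  then have "slack K Y \<le> common_slack"
    unfolding common_slack_def using Y(1) finite_components[OF finite_supp]
    by (intro member_le_sum) auto
  moreover have "card (verts Y \<inter> verts K) \<le> card (verts K - verts K')"
    using Y(2) KZ finite_verts[OF finite_supp] by (intro card_mono) auto
  ultimately show ?thesis
    unfolding slack_def using length_cycle_split cycle_length(2) by linarith
qed

lemma peel_inequality:
  "int (mult * length p) + int M \<le> int M * int (card (components K'))
     + 2 * int (card (verts K - verts K')) + int (card (verts C \<inter> verts K')) + int common_slack"
proof (cases "K' = {}")
  case True
  then have "components K' = {}" by simp
  then show ?thesis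
    using of_nat_mono[OF rest_empty_bound[OF True], where 'a = int] length_cycle_split True
    unfolding common_slack_def by simp
next
  case False
  then have "components K' \<noteq> {}" using Union_components[of K'] by auto
  then have r: "card (components K') \<ge> 1"
    using finite_components[OF finite_supp] by (simp add: Suc_le_eq card_gt_0_iff)
  then have Mr: "int M \<le> int M * int (card (components K'))"
    using mult_left_mono[of 1 "int (card (components K'))" "int M"] by simp
  have "card (verts C \<inter> verts K') \<le> M" using length_cycle_split cycle_length(2) by simp
  then show ?thesis
    using mult_cases length_cycle_split
  proof (elim disjE)
    assume "mult = 2"
    show ?thesis
    proof (cases "card (components K') = 1")
      case True
      then show ?thesis using rest_connected_bound \<open>mult = 2\<close> length_cycle_split by simp
    next
      case False
      then have "2 * int M \<le> int M * int (card (components K'))"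
        using r mult_left_mono[of 2 "int (card (components K'))" "int M"] by simp
      then show ?thesis
        using \<open>mult = 2\<close> length_cycle_split \<open>card (verts C \<inter> verts K') \<le> M\<close> by simp
    qed
  qed (use Mr length_cycle_split in simp)
qed

lemma peel_bound:
  assumes children: "\<And>Z. Z \<in> components K' \<Longrightarrow>
      int (\<Sum>a\<in>Ar. child Z a) \<le> potential Z (R \<union> others Z)"
  shows "int (\<Sum>a\<in>Ar. \<rho> a) \<le> potential K R"
proof -
  let ?r = "card (components K')" and ?gs = "\<Sum>Z\<in>components K'. \<Sum>Y\<in>components (R \<union> others Z). slack Z Y"
  have "int (\<Sum>a\<in>Ar. \<rho> a) = int (mult * length p) + (\<Sum>Z\<in>components K'. int (\<Sum>a\<in>Ar. child Z a))"
    using sum_rho_eq sum_rest_children by simp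
  also have "\<dots> \<le> int (mult * length p) + (\<Sum>Z\<in>components K'. potential Z (R \<union> others Z))"
    using children by (simp add: sum_mono)
  also have "\<dots> = int (mult * length p) + int M * cycle_rank K' + 2 * int (card (verts K'))
      - 2 * int M * int ?r + int ?gs"
    using sum_potential_components[OF finite_supp] by simp
  also have "\<dots> \<le> potential K R"
  proof -
    have "int M * cycle_rank K' \<le> int M * (cycle_rank K - 1)"
      using cycle_rank_rest by (intro mult_left_mono) auto
    moreover have "int (?gs + card (verts C \<inter> verts K') + common_slack)
        \<le> int (M * ?r + (\<Sum>Y\<in>components R. slack K Y))"
      using children_slack_le by (simp only: of_nat_le_iff)
    then have "int ?gs + int (card (verts C \<inter> verts K')) + int common_slack
        \<le> int M * int ?r + int (\<Sum>Y\<in>components R. slack K Y)"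
      by (simp only: of_nat_add of_nat_mult)
    ultimately show ?thesis
      using peel_inequality card_verts_support unfolding potential_def by (simp add: algebra_simps)
  qed
  finally show ?thesis .
qed

end

context omega2_quiver
begin

lemma potential_bound:
  assumes "\<And>a. a \<in> Ar \<Longrightarrow> \<rho> a \<le> \<delta> a" "balanced \<rho>" "weakly_connected (supp \<rho>)"
  shows "int (\<Sum>a\<in>Ar. \<rho> a) \<le> potential (supp \<rho>) (supp (\<lambda>a. \<delta> a - \<rho> a))"
  using assms
proof (induction "\<Sum>a\<in>Ar. \<rho> a" arbitrary: \<rho> rule: less_induct)
  case less
  obtain a0 where "a0 \<in> supp \<rho>" using less.prems(3) unfolding weakly_connected_def by auto
  then obtain p where p: "primitive_closed Ar tail head p" "set p \<subseteq> supp \<rho>"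
    using primitive_closed_in_support[OF less.prems(2)] mem_supp_iff
    unfolding supp_arrows_def by blast
  interpret peeling tail head Ar \<delta> M \<rho> p
    using less.prems p by unfold_locales auto
  show ?case
  proof (rule peel_bound)
    fix Z assume Z: "Z \<in> components K'"
    show "int (\<Sum>a\<in>Ar. child Z a) \<le> potential Z (R \<union> others Z)"
      using less.hyps[OF sum_child_less child_le_delta child_balanced[OF Z]]
        child_support[OF Z] child_residual_support[OF Z] components_connected[OF Z] by simp
  qed
qed

lemma sum_delta_bound:
  "int (\<Sum>a\<in>Ar. \<delta> a) \<le> int M * (int (card Ar) - int (card (verts Ar)) - 1) + 2 * int (card (verts Ar))"
proof -
  have "supp \<delta> = Ar" "supp (\<lambda>a. \<delta> a - \<delta> a) = {}"
    using delta_pos unfolding supp_arrows_def by auto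
  then have "int (\<Sum>a\<in>Ar. \<delta> a) \<le> potential Ar {}"
    using potential_bound[OF _ delta_balanced] arrows_connected by simp
  then show ?thesis
    unfolding potential_def cycle_rank_connected[OF arrows_connected] by (simp add: algebra_simps)
qed

end

context quiver_graph
begin

text \<open>A separated part of a connected support is all of it, so a decomposition would consist of
  a single strongly connected piece.\<close>

lemma decomposable_not_connected:
  assumes "decomposable Ar tail head f"
  shows "supp_arrows Ar f \<noteq> {}" and "\<not> weakly_connected (supp_arrows Ar f)"
proof -
  let ?S = "supp_arrows Ar f"
  have ne: "?S \<noteq> {}" and nsc: "\<not> strongly_connected (verts ?S) ?S tail head"
    and "\<exists>P. \<Union>P = ?S \<and> (\<forall>X\<in>P. X \<noteq> {} \<and> strongly_connected (verts X) X tail head) \<and>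
      (\<forall>X\<in>P. \<forall>Y\<in>P. X \<noteq> Y \<longrightarrow> verts X \<inter> verts Y = {})"
    using assms unfolding decomposable_def Let_def by auto
  then obtain P where P: "\<Union>P = ?S" "\<And>X. X \<in> P \<Longrightarrow> X \<noteq> {} \<and> strongly_connected (verts X) X tail head"
      "\<And>X Y. X \<in> P \<Longrightarrow> Y \<in> P \<Longrightarrow> X \<noteq> Y \<Longrightarrow> verts X \<inter> verts Y = {}"
    by (elim exE conjE) simp
  show "?S \<noteq> {}" by (rule ne)
  show "\<not> weakly_connected ?S"
  proof
    assume conn: "weakly_connected ?S"
    obtain X where X: "X \<in> P" using P(1) ne by auto
    have "separated ?S X"
      unfolding separated_def
    proof (intro ballI)
      fix b assume b: "b \<in> ?S - X"
      then obtain Y where Y: "Y \<in> P" "b \<in> Y" using P(1) by auto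
      moreover have "Y \<noteq> X" using Y(2) b by auto
      ultimately have "verts Y \<inter> verts X = {}" using P(3) X by simp
      then show "ends b \<inter> verts X = {}" using ends_subset_verts[OF Y(2)] by auto
    qed
    moreover have "X \<subseteq> ?S" "X \<noteq> {}" using P(1,2) X by auto
    ultimately have "X = ?S" using separated_subset_eq[OF conn] by blast
    then show False using P(2)[OF X] nsc by simp
  qed
qed

lemma verts_eq_if_strongly_connected:
  assumes "quiver V Ar tail head" "strongly_connected V Ar tail head"
  shows "verts Ar = V"
proof
  show "verts Ar \<subseteq> V" using assms(1) unfolding quiver_def arrow_verts_def by auto
  obtain h where h: "closed_path Ar tail head h" "V \<subseteq> path_verts tail head h"
    using assms(2) unfolding strongly_connected_def by auto
  then have "h \<noteq> []" "set h \<subseteq> Ar" unfolding closed_path_def is_path_def by auto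
  then have "path_verts tail head h \<subseteq> verts Ar"
    unfolding path_verts_def arrow_verts_def by (auto intro: nth_mem)
  then show "V \<subseteq> verts Ar" using h(2) by auto
qed

end

context finite_quiver
begin

lemma primitive_closed_length_le:
  assumes "primitive_closed Ar tail head p"
  shows "length p \<le> card (verts Ar)"
proof -
  have "set p \<subseteq> Ar" using assms unfolding primitive_closed_def closed_path_def is_path_def by blast
  then have "card (verts (set p)) \<le> card (verts Ar)"
    using finite_verts[OF finite_arrows] verts_mono by (intro card_mono) auto
  then show ?thesis using primitive_closed_verts(2)[OF assms] by simp
qed

lemma mQ_bounds:
  assumes "primitive_closed Ar tail head p0"
  shows "primitive_closed Ar tail head p \<Longrightarrow> length p \<le> mQ Ar tail head"
    and "mQ Ar tail head \<le> card (verts Ar)"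
proof -
  let ?L = "{length p | p. primitive_closed Ar tail head p}"
  have sub: "?L \<subseteq> {..card (verts Ar)}" using primitive_closed_length_le by auto
  then have fin: "finite ?L" using finite_subset by blast
  then show "primitive_closed Ar tail head p \<Longrightarrow> length p \<le> mQ Ar tail head"
    unfolding mQ_def by (intro Max_ge) auto
  have "?L \<noteq> {}" using assms by blast
  with fin have "Max ?L \<in> ?L" by (rule Max_in)
  then have "Max ?L \<in> {..card (verts Ar)}" using sub by (rule subsetD[rotated])
  then show "mQ Ar tail head \<le> card (verts Ar)" unfolding mQ_def by simp
qed

end

lemma omega2_quiver_if_Omega2:
  assumes fin: "finite Ar" and \<delta>: "\<delta> \<in> Omega2 Ar tail head"
  shows "omega2_quiver tail head Ar \<delta> (mQ Ar tail head)"
proof -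
  interpret finite_quiver tail head Ar using fin by unfold_locales
  obtain h where h: "\<delta> = count_list h" "closed_path Ar tail head h" "set h = Ar"
    using \<delta> unfolding Omega2_def Omega0_def mdeg_def by auto
  obtain p0 where "primitive_closed Ar tail head p0"
    using primitive_closed_in_closed[OF h(2)] by blast
  note mQ = mQ_bounds[OF this]
  show ?thesis
  proof unfold_locales
    show "\<delta> a \<ge> 1" if "a \<in> Ar" for a
    proof -
      have "count_list h a \<noteq> 0" using that h(3) count_list_0_iff by metis
      then show ?thesis using h(1) by simp
    qed
    show "balanced \<delta>" using balanced_closed_path[OF h(2)] h(1) by simp
    show "weakly_connected Ar"
      using is_path_weakly_connected h(2,3) unfolding closed_path_def by blast
    show "supp_arrows Ar (\<lambda>b. \<delta> b - 2 * count_list p b) \<noteq> {} \<and>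
      \<not> weakly_connected (supp_arrows Ar (\<lambda>b. \<delta> b - 2 * count_list p b))"
      if "primitive_closed Ar tail head p" "\<forall>a\<in>set p. \<delta> a \<ge> 2" for p
    proof -
      have "delta_double Ar tail head \<delta> p" unfolding delta_double_def using that by auto
      then have "decomposable Ar tail head (\<lambda>b. \<delta> b - 2 * count_list p b)"
        using \<delta> unfolding Omega2_def mdeg_def by auto
      then show ?thesis using decomposable_not_connected by blast
    qed
  qed (use mQ in auto)
qed

theorem theorem3p9:
  fixes V :: "'v set" and Ar :: "'a set" and tail head :: "'a \<Rightarrow> 'v"
    and n d m :: nat and \<delta> :: "'a \<Rightarrow> nat"
  assumes "QClass n d m V Ar tail head"
    and "\<delta> \<in> Omega2 Ar tail head"
  shows "int (\<Sum>a\<in>Ar. \<delta> a) \<le> int m * (int d - int n - 1) + 2 * int n"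
proof -
  have Q: "quiver V Ar tail head" "strongly_connected V Ar tail head"
    and card: "card V = n" "card Ar = d" and m: "mQ Ar tail head = m"
    using assms(1) unfolding QClass_def by auto
  then interpret omega2_quiver tail head Ar \<delta> m
    using omega2_quiver_if_Omega2[OF _ assms(2)] unfolding quiver_def by blast
  have "verts Ar = V" by (rule verts_eq_if_strongly_connected[OF Q])
  then show ?thesis using sum_delta_bound card by simp
qed

end
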